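(* For every positive integer $T$ there exist a state (a graph $G=(V,E)$ with positive vertex populations), a number of districts $k$, positive weights $\Theta=(\theta(i,j))_{i,j\in V}$, and a probability distribution $\mathcal{D}$ over valid redistricting maps such that, letting $f(A)=\mathbb{E}_{A'\sim\mathcal{D}}[d_\Theta(A,A')]$ be the medoid cost, $A^*$ a population medoid (a minimizer of $f$ over valid maps), and $A_1,\dots,A_T$ i.i.d. samples from $\mathcal{D}$: (1) $\Pr\big[\min_{A\in\{A_1,\dots,A_T\}} d_\Theta(A,A^* )\ge 0.331\big]\ge\frac{2}{3}$, and (2) $\Pr\big[\min_{A\in\{A_1,\dots,A_T\}} f(A)\ge 1.1\, f(A^* )\big]\ge\frac{2}{3}$.
   Context: A redistricting map is a partition of $V$ into $k$ nonempty pairwise disjoint districts; a map is valid if its districts are contiguous in $G$, have approximately equal total population, and satisfy any other fixed validity constraints. Maps are identified with adjacency matrices $A$, $A(i,j)=1$ iff $i,j$ lie in the same district and $0$ otherwise. $d_\Theta(A_1,A_2)=\frac{1}{2}\sum_{i,j\in V}\theta(i,j)|A_1(i,j)-A_2(i,j)|$, summing over ordered pairs. *)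

theory Defs
  imports "HOL-Probability.Probability"
begin

definition is_state :: "nat set \<Rightarrow> (nat \<times> nat) set \<Rightarrow> (nat \<Rightarrow> real) \<Rightarrow> bool" where
  "is_state V E pop \<longleftrightarrow> finite V \<and> E \<subseteq> V \<times> V \<and> sym E \<and> irrefl E
     \<and> (\<forall>v\<in>V. pop v > 0)"

definition is_map :: "nat set \<Rightarrow> nat \<Rightarrow> nat set set \<Rightarrow> bool" where
  "is_map V k P \<longleftrightarrow> \<Union>P = V \<and> (\<forall>D\<in>P. D \<noteq> {})
     \<and> (\<forall>D1\<in>P. \<forall>D2\<in>P. D1 \<noteq> D2 \<longrightarrow> D1 \<inter> D2 = {}) \<and> finite P \<and> card P = k"

definition contiguous :: "(nat \<times> nat) set \<Rightarrow> nat set \<Rightarrow> bool" where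
  "contiguous E D \<longleftrightarrow> (\<forall>u\<in>D. \<forall>v\<in>D. (u, v) \<in> (E \<inter> D \<times> D)\<^sup>*)"

definition district_pop :: "(nat \<Rightarrow> real) \<Rightarrow> nat set \<Rightarrow> real" where
  "district_pop pop D = (\<Sum>v\<in>D. pop v)"

definition valid_map ::
  "nat set \<Rightarrow> (nat \<times> nat) set \<Rightarrow> (nat \<Rightarrow> real) \<Rightarrow> nat \<Rightarrow> real \<Rightarrow> nat set set \<Rightarrow> bool" where
  "valid_map V E pop k eps P \<longleftrightarrow> is_map V k P \<and> (\<forall>D\<in>P. contiguous E D)
     \<and> (\<forall>D\<in>P. \<bar>district_pop pop D - district_pop pop V / real k\<bar>
                \<le> eps * (district_pop pop V / real k))"

definition adj :: "nat set set \<Rightarrow> nat \<Rightarrow> nat \<Rightarrow> real" where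
  "adj P i j = (if \<exists>D\<in>P. i \<in> D \<and> j \<in> D then 1 else 0)"

definition dTheta :: "nat set \<Rightarrow> (nat \<Rightarrow> nat \<Rightarrow> real) \<Rightarrow> nat set set \<Rightarrow> nat set set \<Rightarrow> real" where
  "dTheta V \<theta> A1 A2 = (1/2) * (\<Sum>i\<in>V. \<Sum>j\<in>V. \<theta> i j * \<bar>adj A1 i j - adj A2 i j\<bar>)"

definition medoid_cost ::
  "nat set \<Rightarrow> (nat \<Rightarrow> nat \<Rightarrow> real) \<Rightarrow> nat set set pmf \<Rightarrow> nat set set \<Rightarrow> real" where
  "medoid_cost V \<theta> \<D> A = measure_pmf.expectation \<D> (\<lambda>A'. dTheta V \<theta> A A')"

end

theory Submission
  imports Defs
begin

text \<open>Take the complete graph on five unit-population vertices, three districts, unit weights and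
tolerance 1 (so every partition into three blocks of size at most 3 is valid), and let \<open>\<D>\<close> be
uniform on three maps at pairwise distances 4, 5, 5. Each of them has medoid cost at least 3,
while the off-support map \<open>{{0,1},{2,3},{4}}\<close> has cost 8/3, so a medoid \<open>A\<^sup>*\<close> costs at
most 8/3. By the triangle inequality \<open>f(A) \<le> d\<^sub>\<Theta>(A, A\<^sup>*) + f(A\<^sup>*)\<close>, so every
sample is at distance at least 1/3 from \<open>A\<^sup>*\<close> and costs at least \<open>3 \<ge> 1.1 \<cdot> 8/3\<close>: both
events hold with probability 1.\<close>

lemma dTheta_commute: "dTheta V \<theta> A B = dTheta V \<theta> B A"
  unfolding dTheta_def by (simp add: abs_minus_commute)

lemma dTheta_self: "dTheta V \<theta> A A = 0"
  by (simp add: dTheta_def)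

lemma dTheta_triangle:
  assumes "\<forall>i\<in>V. \<forall>j\<in>V. 0 \<le> \<theta> i j"
  shows "dTheta V \<theta> A C \<le> dTheta V \<theta> A B + dTheta V \<theta> B C"
proof -
  have "\<theta> i j * \<bar>adj A i j - adj C i j\<bar>
        \<le> \<theta> i j * \<bar>adj A i j - adj B i j\<bar> + \<theta> i j * \<bar>adj B i j - adj C i j\<bar>"
    if "i \<in> V" "j \<in> V" for i j
  proof -
    have "\<theta> i j * \<bar>adj A i j - adj C i j\<bar>
          \<le> \<theta> i j * (\<bar>adj A i j - adj B i j\<bar> + \<bar>adj B i j - adj C i j\<bar>)"
      using assms that by (intro mult_left_mono) auto
    then show ?thesis by (simp add: distrib_left)
  qed
  then show ?thesis
    unfolding dTheta_def by (simp add: sum.distrib[symmetric] sum_mono)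
qed

lemma abs_dTheta_le: "\<bar>dTheta V \<theta> A B\<bar> \<le> (\<Sum>i\<in>V. \<Sum>j\<in>V. \<bar>\<theta> i j\<bar>) / 2"
proof -
  have "\<bar>\<Sum>i\<in>V. \<Sum>j\<in>V. \<theta> i j * \<bar>adj A i j - adj B i j\<bar>\<bar>
        \<le> (\<Sum>i\<in>V. \<Sum>j\<in>V. \<bar>\<theta> i j * \<bar>adj A i j - adj B i j\<bar>\<bar>)"
    by (rule order.trans[OF sum_abs sum_mono[OF sum_abs]])
  also have "\<dots> \<le> (\<Sum>i\<in>V. \<Sum>j\<in>V. \<bar>\<theta> i j\<bar>)"
    by (intro sum_mono) (simp add: adj_def abs_mult)
  finally show ?thesis unfolding dTheta_def by (simp add: abs_mult)
qed

lemma integrable_dTheta: "integrable (measure_pmf \<D>) (\<lambda>B. dTheta V \<theta> A B)"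
  by (rule measure_pmf.integrable_const_bound[OF AE_I2])
     (unfold real_norm_def, rule abs_dTheta_le, simp)

lemma medoid_cost_triangle:
  assumes "\<forall>i\<in>V. \<forall>j\<in>V. 0 \<le> \<theta> i j"
  shows "medoid_cost V \<theta> \<D> A \<le> dTheta V \<theta> A B + medoid_cost V \<theta> \<D> B"
proof -
  have "medoid_cost V \<theta> \<D> A \<le> measure_pmf.expectation \<D> (\<lambda>C. dTheta V \<theta> A B + dTheta V \<theta> B C)"
    unfolding medoid_cost_def
    by (intro integral_mono integrable_dTheta Bochner_Integration.integrable_add
              integrable_const dTheta_triangle assms) simp
  also have "\<dots> = dTheta V \<theta> A B + medoid_cost V \<theta> \<D> B"
    unfolding medoid_cost_def by (simp add: integrable_dTheta)
  finally show ?thesis .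
qed

lemma medoid_cost_pmf_of_set:
  assumes "finite S" "S \<noteq> {}"
  shows "medoid_cost V \<theta> (pmf_of_set S) A = (\<Sum>B\<in>S. dTheta V \<theta> A B) / card S"
  unfolding medoid_cost_def using assms by (simp add: integral_pmf_of_set)

lemma prob_Pi_pmf_Min_ge:
  assumes "finite I" "I \<noteq> {}" "\<forall>x\<in>set_pmf \<D>. c \<le> g x"
  shows "measure_pmf.prob (Pi_pmf I dflt (\<lambda>_. \<D>)) {s. c \<le> Min ((\<lambda>i. g (s i)) ` I)} = 1"
proof -
  have "c \<le> Min ((\<lambda>i. g (s i)) ` I)" if "s \<in> set_pmf (Pi_pmf I dflt (\<lambda>_. \<D>))" for s
    using that assms by (auto simp: set_Pi_pmf PiE_dflt_def)
  then show ?thesis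
    by (subst measure_pmf.prob_eq_1) (auto simp: AE_measure_pmf_iff)
qed

definition complete_edges :: "nat set \<Rightarrow> (nat \<times> nat) set" where
  "complete_edges V = {(i, j). i \<in> V \<and> j \<in> V \<and> i \<noteq> j}"

lemma is_state_complete_edges:
  "finite V \<Longrightarrow> \<forall>v\<in>V. pop v > 0 \<Longrightarrow> is_state V (complete_edges V) pop"
  unfolding is_state_def complete_edges_def by (auto simp: sym_def irrefl_def)

lemma contiguous_complete_edges:
  assumes "D \<subseteq> V"
  shows "contiguous (complete_edges V) D"
  unfolding contiguous_def
proof (intro ballI)
  fix u v assume "u \<in> D" "v \<in> D"
  then have "u = v \<or> (u, v) \<in> complete_edges V \<inter> D \<times> D"
    using assms by (auto simp: complete_edges_def)
  then show "(u, v) \<in> (complete_edges V \<inter> D \<times> D)\<^sup>*" by blast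
qed

lemma valid_map_complete_edges_unit_pop:
  assumes "finite V" "is_map V k P" "\<forall>D\<in>P. real (card D) * k \<le> 2 * card V"
  shows "valid_map V (complete_edges V) (\<lambda>_. 1) k 1 P"
  unfolding valid_map_def
proof (intro conjI ballI)
  fix D assume "D \<in> P"
  then have "D \<subseteq> V" "k > 0" using assms(2) by (auto simp: is_map_def)
  then show "contiguous (complete_edges V) D" by (simp add: contiguous_complete_edges)
  have "real (card D) * k \<le> 2 * card V" using \<open>D \<in> P\<close> assms(3) by blast
  then have "\<bar>real (card D) - card V / k\<bar> \<le> card V / k"
    using \<open>k > 0\<close> by (simp add: abs_le_iff field_simps)
  then show "\<bar>district_pop (\<lambda>_. 1) D - district_pop (\<lambda>_. 1) V / real k\<bar>
                \<le> 1 * (district_pop (\<lambda>_. 1) V / real k)"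
    by (simp add: district_pop_def)
qed (rule assms)

definition V5 :: "nat set" where
  "V5 = {0, 1, 2, 3, 4}"

definition sample_map_1 :: "nat set set" where
  "sample_map_1 = {{0, 1, 2}, {3}, {4}}"

definition sample_map_2 :: "nat set set" where
  "sample_map_2 = {{0, 1, 3}, {2}, {4}}"

definition sample_map_3 :: "nat set set" where
  "sample_map_3 = {{0, 4}, {1}, {2, 3}}"

definition sample_maps :: "nat set set set" where
  "sample_maps = {sample_map_1, sample_map_2, sample_map_3}"

definition central_map :: "nat set set" where
  "central_map = {{0, 1}, {2, 3}, {4}}"

abbreviation valid_K5 :: "nat set set \<Rightarrow> bool" where
  "valid_K5 \<equiv> valid_map V5 (complete_edges V5) (\<lambda>_. 1) 3 1"

abbreviation d_K5 :: "nat set set \<Rightarrow> nat set set \<Rightarrow> real" where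
  "d_K5 \<equiv> dTheta V5 (\<lambda>_ _. 1)"

abbreviation cost_K5 :: "nat set set \<Rightarrow> real" where
  "cost_K5 \<equiv> medoid_cost V5 (\<lambda>_ _. 1) (pmf_of_set sample_maps)"

lemmas K5_maps_defs = V5_def sample_map_1_def sample_map_2_def sample_map_3_def central_map_def

lemma valid_K5I:
  assumes "is_map V5 3 P" "\<forall>D\<in>P. card D \<le> 3"
  shows "valid_K5 P"
  using assms by (intro valid_map_complete_edges_unit_pop) (auto simp: V5_def)

lemma central_map_valid: "valid_K5 central_map"
  by (rule valid_K5I; simp add: is_map_def K5_maps_defs singleton_insert_inj_eq' doubleton_eq_iff; auto)

lemma d_K5_values:
  "d_K5 sample_map_1 sample_map_2 = 4"
  "d_K5 sample_map_1 sample_map_3 = 5"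
  "d_K5 sample_map_2 sample_map_3 = 5"
  "d_K5 central_map sample_map_1 = 3"
  "d_K5 central_map sample_map_2 = 3"
  "d_K5 central_map sample_map_3 = 2"
  by (simp_all add: dTheta_def adj_def K5_maps_defs)

lemma sample_maps_distinct:
  "sample_map_1 \<noteq> sample_map_2" "sample_map_1 \<noteq> sample_map_3" "sample_map_2 \<noteq> sample_map_3"
  using d_K5_values dTheta_self by force+

lemma sample_maps_valid: "A \<in> sample_maps \<Longrightarrow> valid_K5 A"
  unfolding sample_maps_def
  by (elim insertE emptyE; hypsubst; rule valid_K5I;
      simp add: is_map_def K5_maps_defs singleton_insert_inj_eq' doubleton_eq_iff; auto)

lemma cost_K5_eq:
  "cost_K5 A = (d_K5 A sample_map_1 + d_K5 A sample_map_2 + d_K5 A sample_map_3) / 3"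
proof -
  have "cost_K5 A = (\<Sum>B\<in>sample_maps. d_K5 A B) / card sample_maps"
    by (rule medoid_cost_pmf_of_set) (simp_all add: sample_maps_def)
  then show ?thesis
    by (simp add: sample_maps_def sample_maps_distinct add.assoc)
qed

lemma cost_K5_central_map: "cost_K5 central_map = 8 / 3"
  by (simp add: cost_K5_eq d_K5_values)

lemma cost_K5_sample_maps:
  assumes "A \<in> sample_maps"
  shows "3 \<le> cost_K5 A"
proof -
  have "d_K5 sample_map_2 sample_map_1 = 4" "d_K5 sample_map_3 sample_map_1 = 5"
    "d_K5 sample_map_3 sample_map_2 = 5"
    using d_K5_values dTheta_commute by metis+
  moreover have "A = sample_map_1 \<or> A = sample_map_2 \<or> A = sample_map_3"
    using assms by (simp add: sample_maps_def)
  ultimately show ?thesis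
    by (auto simp: cost_K5_eq d_K5_values dTheta_self)
qed

lemma K5_medoid_gap:
  assumes "\<forall>A. valid_K5 A \<longrightarrow> cost_K5 Astar \<le> cost_K5 A" and "A \<in> sample_maps"
  shows "0.331 \<le> d_K5 A Astar" and "1.1 * cost_K5 Astar \<le> cost_K5 A"
proof -
  have "cost_K5 Astar \<le> 8 / 3"
    using assms(1) central_map_valid cost_K5_central_map by metis
  moreover have "3 \<le> cost_K5 A"
    using assms(2) by (rule cost_K5_sample_maps)
  moreover have "cost_K5 A \<le> d_K5 A Astar + cost_K5 Astar"
    by (rule medoid_cost_triangle) simp
  ultimately show "0.331 \<le> d_K5 A Astar" and "1.1 * cost_K5 Astar \<le> cost_K5 A"
    by simp_all
qed

theorem theorem3:
  fixes T :: nat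
  assumes "T > 0"
  shows "\<exists>V E pop k eps \<theta> \<D>.
     is_state V E pop \<and> eps \<ge> 0 \<and> (\<forall>i\<in>V. \<forall>j\<in>V. \<theta> i j > 0)
     \<and> set_pmf \<D> \<subseteq> {A. valid_map V E pop k eps A}
     \<and> (\<forall>Astar. valid_map V E pop k eps Astar
          \<and> (\<forall>A. valid_map V E pop k eps A \<longrightarrow> medoid_cost V \<theta> \<D> Astar \<le> medoid_cost V \<theta> \<D> A)
        \<longrightarrow>
          measure_pmf.prob (Pi_pmf {..<T} {} (\<lambda>_. \<D>))
             {s. Min ((\<lambda>i. dTheta V \<theta> (s i) Astar) ` {..<T}) \<ge> 0.331} \<ge> 2/3
        \<and> measure_pmf.prob (Pi_pmf {..<T} {} (\<lambda>_. \<D>))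
             {s. Min ((\<lambda>i. medoid_cost V \<theta> \<D> (s i)) ` {..<T})
                   \<ge> 1.1 * medoid_cost V \<theta> \<D> Astar} \<ge> 2/3)"
proof -
  let ?\<D> = "pmf_of_set sample_maps"
  have support: "set_pmf ?\<D> = sample_maps"
    by (simp add: sample_maps_def)
  have "is_state V5 (complete_edges V5) (\<lambda>_. 1)"
    by (rule is_state_complete_edges) (simp_all add: V5_def)
  moreover have "set_pmf ?\<D> \<subseteq> {A. valid_K5 A}"
    using sample_maps_valid support by auto
  moreover have
    "measure_pmf.prob (Pi_pmf {..<T} {} (\<lambda>_. ?\<D>))
       {s. 0.331 \<le> Min ((\<lambda>i. d_K5 (s i) Astar) ` {..<T})} \<ge> 2/3
     \<and> measure_pmf.prob (Pi_pmf {..<T} {} (\<lambda>_. ?\<D>))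
       {s. 1.1 * cost_K5 Astar \<le> Min ((\<lambda>i. cost_K5 (s i)) ` {..<T})} \<ge> 2/3"
    if "\<forall>A. valid_K5 A \<longrightarrow> cost_K5 Astar \<le> cost_K5 A" for Astar
  proof -
    have samples: "finite {..<T}" "{..<T} \<noteq> {}"
      using assms by auto
    show ?thesis
      using prob_Pi_pmf_Min_ge[OF samples, of ?\<D> "0.331" "\<lambda>A. d_K5 A Astar"]
        prob_Pi_pmf_Min_ge[OF samples, of ?\<D> "1.1 * cost_K5 Astar" cost_K5]
        K5_medoid_gap[OF that] support
      by simp
  qed
  ultimately show ?thesis
    by (intro exI[of _ V5] exI[of _ "complete_edges V5"] exI[of _ "\<lambda>_. 1"] exI[of _ 3]
          exI[of _ 1] exI[of _ "\<lambda>_ _. 1"] exI[of _ ?\<D>]) auto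
qed

end
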